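(* Let $p(\boldsymbol{x},y)$ be a joint density on $\mathcal{X}\times\{+1,-1\}$ with class priors $\pi_+=p(y=+1)\in(0,1)$, $\pi_-=1-\pi_+$. Generate a labeled noisy example as follows: draw two labeled examples $(\boldsymbol{x},y),(\boldsymbol{x}',y')$ independently from $p(\boldsymbol{x},y)$ conditioned on $(y,y')\in\{(+1,+1),(+1,-1),(-1,-1)\}$; independently draw an observed label $\widetilde{y}$ uniformly from $\{+1,-1\}$; if $\widetilde{y}=+1$ output the instance $\boldsymbol{x}$ with true label $y$, and if $\widetilde{y}=-1$ output the instance $\boldsymbol{x}'$ with true label $y'$. Denote the true label of the output by $y$ and define the inverse noise rates $\phi_+=p(y=-1\mid\widetilde{y}=+1)$, $\phi_-=p(y=+1\mid\widetilde{y}=-1)$ and the noise rates $\rho_+=p(\widetilde{y}=-1\mid y=+1)$, $\rho_-=p(\widetilde{y}=+1\mid y=-1)$. Then $$\phi_+=\frac{\pi_-^2}{\pi_+^2+\pi_-^2+\pi_+\pi_-},\quad \rho_+=\frac{\pi_+}{1+\pi_+},\quad \phi_-=\frac{\pi_+^2}{\pi_+^2+\pi_-^2+\pi_+\pi_-},\quad \rho_-=\frac{\pi_-}{1+\pi_-}.$$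
   Context: This formalizes viewing pairwise comparison data $(\boldsymbol{x},\boldsymbol{x}')$ as noisy-label data: the first component of each pair is treated as an observed positive ($\widetilde{y}=+1$) and the second as an observed negative ($\widetilde{y}=-1$), with equally many observed positives and negatives, so $p(\widetilde{y}=+1)=p(\widetilde{y}=-1)=1/2$. *)

theory Defs
  imports "HOL-Probability.Probability"
begin

text \<open>Labels: True encodes +1, False encodes -1.
  A labeled example is an element of 'a \<times> bool, drawn from the probability measure M.\<close>

definition allowed_pair :: "bool \<times> bool \<Rightarrow> bool" where
  "allowed_pair yy \<longleftrightarrow> yy \<in> {(True, True), (True, False), (False, False)}"

definition pair_measure_cond :: "('a \<times> bool) measure \<Rightarrow> (('a \<times> bool) \<times> ('a \<times> bool)) measure" where
  "pair_measure_cond M = uniform_measure (M \<Otimes>\<^sub>M M)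
     {zz \<in> space (M \<Otimes>\<^sub>M M). allowed_pair (snd (fst zz), snd (snd zz))}"

definition gen_joint :: "('a \<times> bool) measure \<Rightarrow> ((('a \<times> bool) \<times> ('a \<times> bool)) \<times> bool) measure" where
  "gen_joint M = pair_measure_cond M \<Otimes>\<^sub>M uniform_count_measure (UNIV :: bool set)"

text \<open>Output: (observed label, output instance with its true label).\<close>
definition gen_output :: "(('a \<times> bool) \<times> ('a \<times> bool)) \<times> bool \<Rightarrow> bool \<times> ('a \<times> bool)" where
  "gen_output w = (snd w, if snd w then fst (fst w) else snd (fst w))"

definition noisy_measure :: "('a \<times> bool) measure \<Rightarrow> (bool \<times> ('a \<times> bool)) measure" where
  "noisy_measure M = distr (gen_joint M) (count_space UNIV \<Otimes>\<^sub>M M) gen_output"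

end

theory Submission
  imports Defs
begin

text \<open>Conditioning the label pair on \<open>{(+,+), (+,-), (-,-)}\<close> leaves an event of probability
  \<open>Z = \<pi>\<^sub>+ + \<pi>\<^sub>-\<^sup>2 = \<pi>\<^sub>+\<^sup>2 + \<pi>\<^sub>-\<^sup>2 + \<pi>\<^sub>+\<pi>\<^sub>-\<close>. With observed label \<open>+\<close> the output is the first
  example, whose true label is \<open>+\<close> with weight \<open>\<pi>\<^sub>+\<close> and \<open>-\<close> only in the pair \<open>(-,-)\<close>, with weight
  \<open>\<pi>\<^sub>-\<^sup>2\<close>; with observed label \<open>-\<close> it is the second one, labelled \<open>+\<close> only in \<open>(+,+)\<close>
  (weight \<open>\<pi>\<^sub>+\<^sup>2\<close>) and \<open>-\<close> with weight \<open>\<pi>\<^sub>-\<close>. So the joint law of observed and true label is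
  proportional to this table, and the four conditional probabilities are ratios of its entries.\<close>

lemma measure_pair_measure_Times:
  assumes "prob_space M" "prob_space N" "A \<in> sets M" "B \<in> sets N"
  shows "measure (M \<Otimes>\<^sub>M N) (A \<times> B) = measure M A * measure N B"
proof -
  interpret N: prob_space N by fact
  have "emeasure (M \<Otimes>\<^sub>M N) (A \<times> B) = emeasure M A * emeasure N B"
    using N.emeasure_pair_measure_Times assms by blast
  then show ?thesis by (simp add: measure_def enn2real_mult)
qed

lemma (in prob_space) cond_prob_eq_joint:
  fixes Y :: "'a \<Rightarrow> 'b::finite"
  assumes "\<And>a b. {x \<in> space M. X x = a \<and> Y x = b} \<in> events"
  shows "\<P>(x in M. Y x = b \<bar> X x = a) =
    \<P>(x in M. X x = a \<and> Y x = b) / (\<Sum>c\<in>UNIV. \<P>(x in M. X x = a \<and> Y x = c))"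
proof -
  have "{x \<in> space M. X x = a} = (\<Union>c. {x \<in> space M. X x = a \<and> Y x = c})"
    by auto
  then have "\<P>(x in M. X x = a) = (\<Sum>c\<in>UNIV. \<P>(x in M. X x = a \<and> Y x = c))"
    using assms by (auto intro!: finite_measure_finite_Union simp: disjoint_family_on_def)
  then show ?thesis
    by (simp add: cond_prob_def conj_commute)
qed

lemma power2_divide_self_add_power2:
  fixes x :: "'a::field"
  shows "x\<^sup>2 / (x + x\<^sup>2) = x / (1 + x)"
proof (cases "x = 0")
  case False
  have "x\<^sup>2 / (x + x\<^sup>2) = (x * x) / (x * (1 + x))"
    by (simp add: power2_eq_square algebra_simps)
  then show ?thesis using False by simp
qed simp

lemma add_one_minus_power2_pos:
  fixes x :: real
  shows "0 < x + (1 - x)\<^sup>2"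
proof -
  have "x + (1 - x)\<^sup>2 = (x - 1/2)\<^sup>2 + 3/4"
    by (simp add: power2_eq_square algebra_simps)
  then show ?thesis by (metis add_nonneg_pos zero_le_power2 zero_less_divide_iff zero_less_numeral)
qed

locale labeled_prob_space = prob_space M for M :: "('a \<times> bool) measure" +
  assumes sets_positive: "{z \<in> space M. snd z} \<in> sets M"
begin

definition prior :: real where
  "prior = prob {z \<in> space M. snd z}"

definition labeled :: "bool \<Rightarrow> ('a \<times> bool) set" where
  "labeled b = {z \<in> space M. snd z = b}"

lemma labeled_False: "labeled False = space M - labeled True"
  by (auto simp: labeled_def)

lemma sets_labeled [measurable]: "labeled b \<in> sets M"
  using sets_positive by (cases b) (auto simp: labeled_False, simp_all add: labeled_def)

lemma prob_labeled: "prob (labeled b) = (if b then prior else 1 - prior)"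
  using prob_compl[OF sets_labeled[of True]]
  by (cases b) (simp_all add: labeled_False, simp_all add: labeled_def prior_def)

abbreviation allowed_pairs :: "(('a \<times> bool) \<times> ('a \<times> bool)) set" where
  "allowed_pairs \<equiv> {zz \<in> space (M \<Otimes>\<^sub>M M). allowed_pair (snd (fst zz), snd (snd zz))}"

lemma allowed_pairs_eq: "allowed_pairs = labeled True \<times> space M \<union> labeled False \<times> labeled False"
  by (auto simp: allowed_pair_def space_pair_measure labeled_def)

lemma measure_allowed_pairs: "measure (M \<Otimes>\<^sub>M M) allowed_pairs = prior + (1 - prior)\<^sup>2"
proof -
  interpret MM: pair_prob_space M M ..
  have "measure (M \<Otimes>\<^sub>M M) allowed_pairs =
      measure (M \<Otimes>\<^sub>M M) (labeled True \<times> space M) + measure (M \<Otimes>\<^sub>M M) (labeled False \<times> labeled False)"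
    unfolding allowed_pairs_eq by (rule MM.finite_measure_Union) (auto simp: labeled_False)
  then show ?thesis
    using prob_labeled[of True] prob_labeled[of False]
    by (simp add: measure_pair_measure_Times prob_space_axioms prob_space power2_eq_square)
qed

lemma emeasure_allowed_pairs: "emeasure (M \<Otimes>\<^sub>M M) allowed_pairs = ennreal (prior + (1 - prior)\<^sup>2)"
proof -
  interpret MM: pair_prob_space M M ..
  show ?thesis
    using measure_allowed_pairs MM.emeasure_eq_measure by auto
qed

lemma measure_pair_measure_cond:
  assumes "E \<in> sets (M \<Otimes>\<^sub>M M)"
  shows "measure (pair_measure_cond M) E =
    measure (M \<Otimes>\<^sub>M M) (allowed_pairs \<inter> E) / (prior + (1 - prior)\<^sup>2)"
  unfolding pair_measure_cond_def using assms add_one_minus_power2_pos[of prior]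
  by (simp add: emeasure_allowed_pairs measure_allowed_pairs)

lemma prob_space_pair_measure_cond: "prob_space (pair_measure_cond M)"
  unfolding pair_measure_cond_def
  using add_one_minus_power2_pos[of prior]
  by (intro prob_space_uniform_measure) (simp_all add: emeasure_allowed_pairs)

lemma measurable_gen_output [measurable]:
  "gen_output \<in> gen_joint M \<rightarrow>\<^sub>M count_space UNIV \<Otimes>\<^sub>M M"
  unfolding gen_joint_def gen_output_def pair_measure_cond_def by measurable

lemma prob_space_uniform_bool: "prob_space (uniform_count_measure (UNIV :: bool set))"
  by (rule prob_space_uniform_count_measure) auto

lemma prob_space_noisy_measure: "prob_space (noisy_measure M)"
  unfolding noisy_measure_def gen_joint_def
  by (intro prob_space.prob_space_distr prob_space_pair prob_space_pair_measure_cond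
      prob_space_uniform_bool measurable_gen_output[unfolded gen_joint_def])

lemma measure_noisy_measure_Times:
  assumes "B \<in> sets M"
  shows "measure (noisy_measure M) ({a} \<times> B) =
    measure (pair_measure_cond M) {zz \<in> space (M \<Otimes>\<^sub>M M). (if a then fst zz else snd zz) \<in> B} / 2"
proof -
  define E where "E = {zz \<in> space (M \<Otimes>\<^sub>M M). (if a then fst zz else snd zz) \<in> B}"
  have "E = (if a then B \<times> space M else space M \<times> B)"
    unfolding E_def using sets.sets_into_space[OF assms] by (auto simp: space_pair_measure)
  then have E: "E \<in> sets (M \<Otimes>\<^sub>M M)"
    using assms by simp
  have "gen_output -` ({a} \<times> B) \<inter> space (gen_joint M) = E \<times> {a}"
    unfolding E_def gen_joint_def gen_output_def pair_measure_cond_def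
    by (auto simp: space_pair_measure space_uniform_count_measure)
  then have "measure (noisy_measure M) ({a} \<times> B) = measure (gen_joint M) (E \<times> {a})"
    unfolding noisy_measure_def using assms by (subst measure_distr) auto
  also have "\<dots> = measure (pair_measure_cond M) E / 2"
    unfolding gen_joint_def using E
    by (subst measure_pair_measure_Times[OF prob_space_pair_measure_cond prob_space_uniform_bool])
      (auto simp: pair_measure_cond_def sets_uniform_count_measure measure_uniform_count_measure)
  finally show ?thesis unfolding E_def .
qed

lemma noisy_labels_eq:
  "{w \<in> space (noisy_measure M). fst w = a \<and> snd (snd w) = b} = {a} \<times> labeled b"
  by (auto simp: noisy_measure_def space_pair_measure labeled_def)

lemma sets_noisy_labels:
  "{w \<in> space (noisy_measure M). fst w = a \<and> snd (snd w) = b} \<in> sets (noisy_measure M)"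
  unfolding noisy_labels_eq by (simp add: noisy_measure_def)

definition noisy_weight :: "bool \<Rightarrow> bool \<Rightarrow> real" where
  "noisy_weight a b =
    (if a then (if b then prior else (1 - prior)\<^sup>2) else (if b then prior\<^sup>2 else 1 - prior))"

lemma prob_noisy_labels:
  "\<P>(w in noisy_measure M. fst w = a \<and> snd (snd w) = b) =
    noisy_weight a b / (2 * (prior + (1 - prior)\<^sup>2))"
proof -
  have "allowed_pairs \<inter> {zz \<in> space (M \<Otimes>\<^sub>M M). (if a then fst zz else snd zz) \<in> labeled b} =
      (if a then (if b then labeled True \<times> space M else labeled False \<times> labeled False)
       else (if b then labeled True \<times> labeled True else space M \<times> labeled False))"
    unfolding allowed_pairs_eq by (auto simp: space_pair_measure labeled_def)
  then show ?thesis
    using prob_labeled[of True] prob_labeled[of False]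
    by (simp add: noisy_labels_eq measure_noisy_measure_Times measure_pair_measure_cond
        measure_pair_measure_Times prob_space_axioms prob_space power2_eq_square noisy_weight_def)
qed

lemma cond_prob_label_given_observed:
  "\<P>(w in noisy_measure M. snd (snd w) = b \<bar> fst w = a) =
    noisy_weight a b / (noisy_weight a True + noisy_weight a False)"
proof -
  interpret N: prob_space "noisy_measure M" by (rule prob_space_noisy_measure)
  show ?thesis
    unfolding N.cond_prob_eq_joint[OF sets_noisy_labels] prob_noisy_labels
    using add_one_minus_power2_pos[of prior] by (simp add: UNIV_bool add_divide_distrib[symmetric])
qed

lemma cond_prob_observed_given_label:
  "\<P>(w in noisy_measure M. fst w = a \<bar> snd (snd w) = b) =
    noisy_weight a b / (noisy_weight True b + noisy_weight False b)"
proof -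
  interpret N: prob_space "noisy_measure M" by (rule prob_space_noisy_measure)
  have events: "{w \<in> space (noisy_measure M). snd (snd w) = b \<and> fst w = a} \<in> N.events" for a b
    using sets_noisy_labels[of a b] by (simp add: conj_commute)
  show ?thesis
    unfolding N.cond_prob_eq_joint[OF events] conj_commute[of "snd (snd _) = _"] prob_noisy_labels
    using add_one_minus_power2_pos[of prior] by (simp add: UNIV_bool add_divide_distrib[symmetric])
qed

end

theorem theorem5:
  fixes M :: "('a \<times> bool) measure" and \<pi>p \<pi>n :: real
  assumes "prob_space M"
    and "{z \<in> space M. snd z} \<in> sets M"
    and "\<pi>p = measure M {z \<in> space M. snd z}"
    and "0 < \<pi>p" and "\<pi>p < 1"
    and "\<pi>n = 1 - \<pi>p"
  shows "\<P>(w in noisy_measure M. \<not> snd (snd w) \<bar> fst w) = \<pi>n^2 / (\<pi>p^2 + \<pi>n^2 + \<pi>p * \<pi>n) \<and>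
         \<P>(w in noisy_measure M. \<not> fst w \<bar> snd (snd w)) = \<pi>p / (1 + \<pi>p) \<and>
         \<P>(w in noisy_measure M. snd (snd w) \<bar> \<not> fst w) = \<pi>p^2 / (\<pi>p^2 + \<pi>n^2 + \<pi>p * \<pi>n) \<and>
         \<P>(w in noisy_measure M. fst w \<bar> \<not> snd (snd w)) = \<pi>n / (1 + \<pi>n)"
proof -
  interpret labeled_prob_space M
    using assms(1,2) by (simp add: labeled_prob_space_def labeled_prob_space_axioms_def)
  have prior: "prior = \<pi>p" using assms(3) by (simp add: prior_def)
  have "\<pi>p\<^sup>2 + \<pi>n\<^sup>2 + \<pi>p * \<pi>n = \<pi>p + \<pi>n\<^sup>2" "\<pi>p\<^sup>2 + \<pi>n\<^sup>2 + \<pi>p * \<pi>n = \<pi>p\<^sup>2 + \<pi>n"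
    unfolding assms(6) by (simp_all add: power2_eq_square algebra_simps)
  then show ?thesis
    using cond_prob_label_given_observed[of True False] cond_prob_observed_given_label[of False True]
      cond_prob_label_given_observed[of False True] cond_prob_observed_given_label[of True False]
      power2_divide_self_add_power2[of \<pi>p] power2_divide_self_add_power2[of \<pi>n]
    by (simp add: noisy_weight_def prior assms(6) add.commute)
qed

end
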